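(* Let $p$ be an odd prime and $n$ a positive integer with $p^n>3$, let $d=\frac{p^n-3}{2}$ and $F(x)=x^d$ on $\mathrm{GF}(p^n)$. For $c=-1$, ${}_c\Delta_F\le4$.
   Context: For a function $F:\mathrm{GF}(p^n)\to\mathrm{GF}(p^n)$ and $a,b,c\in\mathrm{GF}(p^n)$, let ${}_c\Delta_F(a,b)=\#\{x\in\mathrm{GF}(p^n): F(x+a)-cF(x)=b\}$. The $c$-differential uniformity of $F$ is ${}_c\Delta_F=\max\{{}_c\Delta_F(a,b): a,b\in\mathrm{GF}(p^n),\ \text{and } a\neq 0 \text{ if } c=1\}$. *)

theory Defs
  imports Main "HOL-Computational_Algebra.Primes"
begin

definition c_delta :: "('a::{field,finite} \<Rightarrow> 'a) \<Rightarrow> 'a \<Rightarrow> 'a \<Rightarrow> 'a \<Rightarrow> nat" where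
  "c_delta F c a b = card {x. F (x + a) - c * F x = b}"

definition c_diff_uniformity :: "('a::{field,finite} \<Rightarrow> 'a) \<Rightarrow> 'a \<Rightarrow> nat" where
  "c_diff_uniformity F c = Max {c_delta F c a b | a b. c = 1 \<longrightarrow> a \<noteq> 0}"

end

(*
  Write the field size as 2m + 1, so that F(x) = x^(m - 1) and x^m is the quadratic
  character.  Off {0, -a}, a solution of F(x + a) + F(x) = b with x^m = u and (x + a)^m = v
  satisfies the quadratic equation b x (x + a) = v x + u (x + a).  Reading Vieta's relations
  through the character shows that the (u, v)-branch has two solutions only if (-1)^m = u v;
  when (-1)^m = 1 the reflection x |-> -a - x fits the two branches with u = v into the roots
  of one quadratic, and the character of a b, which a solution at 0 or -a determines,
  excludes the branches with u = -v.
*)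
theory Submission
  imports Defs "HOL-Computational_Algebra.Polynomial" "HOL-Number_Theory.Residues"
begin

definition solutions :: "nat \<Rightarrow> 'a::field \<Rightarrow> 'a \<Rightarrow> 'a set" where
  "solutions d a b = {x. (x + a) ^ d + x ^ d = b}"

lemma c_delta_power_minus_one:
  "c_delta (\<lambda>x. x ^ d) (-1) a b = card (solutions d a b)"
  unfolding c_delta_def solutions_def by simp

lemma c_diff_uniformity_le:
  fixes F :: "'a::{field,finite} \<Rightarrow> 'a"
  assumes "\<And>a b. (c = 1 \<longrightarrow> a \<noteq> 0) \<Longrightarrow> c_delta F c a b \<le> k"
  shows "c_diff_uniformity F c \<le> k"
proof -
  let ?D = "{c_delta F c a b | a b. c = 1 \<longrightarrow> a \<noteq> 0}"
  have "?D \<subseteq> (\<lambda>(a, b). c_delta F c a b) ` UNIV" by auto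
  then have "finite ?D" by (rule finite_subset) simp
  moreover have "c_delta F c 1 0 \<in> ?D" by auto
  ultimately show ?thesis
    unfolding c_diff_uniformity_def using assms by (subst Max_le_iff) auto
qed

lemma card_le_2_if_plus_minus:
  fixes X :: "'a::ab_group_add set"
  assumes "\<And>x y. x \<in> X \<Longrightarrow> y \<in> X \<Longrightarrow> y = x \<or> y = - x"
  shows "card X \<le> 2"
proof (cases "X = {}")
  case False
  then obtain x where "x \<in> X" by blast
  then have "X \<subseteq> {x, - x}" using assms by blast
  then have "card X \<le> card {x, - x}" by (rule card_mono[rotated]) simp
  also have "\<dots> \<le> 2" by (simp add: card_insert_le_m1)
  finally show ?thesis .
qed simp

lemma card_le_2_if_quadratic:
  fixes \<alpha> \<beta> \<gamma> :: "'a::field"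
  assumes "\<alpha> \<noteq> 0" and "\<And>x. x \<in> X \<Longrightarrow> \<alpha> * x\<^sup>2 + \<beta> * x + \<gamma> = 0"
  shows "card X \<le> 2"
proof -
  let ?p = "[:\<gamma>, \<beta>, \<alpha>:]"
  have p: "?p \<noteq> 0" "degree ?p = 2" using assms(1) by auto
  have "X \<subseteq> {x. poly ?p x = 0}"
    using assms(2) by (auto simp: power2_eq_square algebra_simps)
  then have "card X \<le> card {x. poly ?p x = 0}"
    using poly_roots_finite[OF p(1)] by (rule card_mono[rotated])
  also have "\<dots> \<le> 2" using card_poly_roots_bound[OF p(1)] p(2) by simp
  finally show ?thesis .
qed

lemma power_card_minus_one_eq_one:
  fixes x :: "'a::{field,finite}"
  assumes "x \<noteq> 0"
  shows "x ^ (card (UNIV :: 'a set) - 1) = 1"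
proof -
  let ?U = "UNIV - {0 :: 'a}"
  have "(\<Prod>y\<in>?U. x * y) = (\<Prod>y\<in>?U. y)"
    by (rule prod.reindex_bij_witness[of _ "\<lambda>y. y / x" "\<lambda>y. x * y"]) (use assms in auto)
  moreover have "(\<Prod>y\<in>?U. x * y) = x ^ card ?U * (\<Prod>y\<in>?U. y)"
    by (simp add: prod.distrib)
  moreover have "card ?U = card (UNIV :: 'a set) - 1"
    by (simp add: card_Diff_singleton)
  ultimately show ?thesis by simp
qed

lemma two_neq_zero_if_odd_card:
  assumes "odd (card (UNIV :: 'a::{ring_1,finite} set))"
  shows "(2::'a) \<noteq> 0"
proof
  assume two: "(2::'a) = 0"
  obtain k where k: "card (UNIV :: 'a set) = 2 * k + 1" using assms by (rule oddE)
  have "of_nat (card (UNIV :: 'a set)) = (0::'a)"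
    by (simp add: of_nat_eq_0_iff_char_dvd CHAR_dvd_CARD)
  then show False using two by (simp add: k)
qed

text \<open>For \<open>x \<notin> {0, -a}\<close> with \<open>x ^ m = u\<close> and \<open>(x + a) ^ m = v\<close> one has
  \<open>x ^ (m - 1) = u / x\<close> and \<open>(x + a) ^ (m - 1) = v / (x + a)\<close>, so the equation
  \<open>(x + a) ^ (m - 1) + x ^ (m - 1) = b\<close> turns into the quadratic equation below.\<close>
definition branch :: "nat \<Rightarrow> 'a::field \<Rightarrow> 'a \<Rightarrow> 'a \<Rightarrow> 'a \<Rightarrow> 'a set" where
  "branch m a b u v =
     {x. x \<noteq> 0 \<and> x + a \<noteq> 0 \<and> x ^ m = u \<and> (x + a) ^ m = v \<and> b * x * (x + a) = v * x + u * (x + a)}"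

lemma card_branch_le_2:
  assumes "b \<noteq> 0"
  shows "card (branch m a b u v) \<le> 2"
  by (rule card_le_2_if_quadratic[OF assms, where \<beta> = "a * b - u - v" and \<gamma> = "- u * a"])
     (auto simp: branch_def power2_eq_square algebra_simps)

lemma branch_pair_vieta:
  assumes x: "x \<in> branch m a b u v" and y: "y \<in> branch m a b u v" and "x \<noteq> y"
  shows "b * x * y = - (u * a)" and "b * (x + a) * (y + a) = v * a"
proof -
  have ex: "b * x * (x + a) = v * x + u * (x + a)" and ey: "b * y * (y + a) = v * y + u * (y + a)"
    using x y by (auto simp: branch_def)
  have "(x - y) * (b * x * y + u * a)
      = y * (b * x * (x + a) - (v * x + u * (x + a))) - x * (b * y * (y + a) - (v * y + u * (y + a)))"
    by (simp add: algebra_simps)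
  then have "(x - y) * (b * x * y + u * a) = 0" using ex ey by simp
  then show "b * x * y = - (u * a)" using \<open>x \<noteq> y\<close> by (simp add: eq_neg_iff_add_eq_0)
  have "(x - y) * (b * (x + a) * (y + a) - v * a)
      = (y + a) * (b * x * (x + a) - (v * x + u * (x + a)))
        - (x + a) * (b * y * (y + a) - (v * y + u * (y + a)))"
    by (simp add: algebra_simps)
  then have "(x - y) * (b * (x + a) * (y + a) - v * a) = 0" using ex ey by simp
  then show "b * (x + a) * (y + a) = v * a" using \<open>x \<noteq> y\<close> by simp
qed

lemma mixed_branch_eq:
  "x \<in> branch m a b u (- u) \<Longrightarrow> b * x * (x + a) = u * a"
  by (auto simp: branch_def algebra_simps)

context
  fixes m :: nat
  assumes two_neq_zero: "(2::'a::{field,finite}) \<noteq> 0"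
    and power_double_m: "\<And>x::'a. x \<noteq> 0 \<Longrightarrow> x ^ (2 * m) = 1"
    and m_ge_2: "m \<ge> 2"
begin

lemma one_neq_minus_one: "(1::'a) \<noteq> - 1"
  using two_neq_zero by (metis add.right_inverse one_add_one)

lemma power_m_square: "x \<noteq> 0 \<Longrightarrow> x ^ m * x ^ m = (1::'a)"
  using power_double_m by (metis mult_2 power_add)

lemma power_m_cases: "x \<noteq> 0 \<Longrightarrow> x ^ m = 1 \<or> x ^ m = (- 1::'a)"
  using power_m_square square_eq_1_iff by blast

lemma power_m_scaled_product:
  fixes b x y c :: 'a
  assumes "b \<noteq> 0" and "b * x * y = c"
  shows "(b * c) ^ m = x ^ m * y ^ m"
proof -
  have "b * c = x * y * (b * b)" unfolding assms(2)[symmetric] by (simp add: ac_simps)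
  then have "(b * c) ^ m = x ^ m * y ^ m * (b ^ m * b ^ m)" by (simp only: power_mult_distrib)
  then show ?thesis using power_m_square[OF assms(1)] by simp
qed

lemma power_m_eq_if_primitive_cube_root:
  fixes a x :: 'a
  assumes "a \<noteq> 0" and "x * (x + a) = - (a * a)"
  shows "x ^ m = a ^ m"
proof -
  have "x \<noteq> 0" using assms by auto
  have "x ^ 3 - a ^ 3 = (x - a) * (x * (x + a) + a * a)"
    by (simp add: power3_eq_cube algebra_simps)
  then have "x ^ 3 = a ^ 3" using assms(2) by simp
  have cube: "(z ^ m) ^ 3 = z ^ m" if "z \<noteq> 0" for z :: 'a
    using power_m_square[OF that] by (simp add: power3_eq_cube)
  have "x ^ m = (x ^ m) ^ 3" using cube[OF \<open>x \<noteq> 0\<close>] by simp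
  also have "\<dots> = (x ^ 3) ^ m" by (metis power_mult mult.commute)
  also have "\<dots> = (a ^ m) ^ 3" using \<open>x ^ 3 = a ^ 3\<close> by (metis power_mult mult.commute)
  also have "\<dots> = a ^ m" using cube[OF assms(1)] .
  finally show ?thesis .
qed

lemma power_pred_mult: "z ^ (m - 1) * z = (z::'a) ^ m"
  using m_ge_2 by (intro power_minus_mult) simp

lemma solution_in_branch:
  fixes a b x :: 'a
  assumes "x \<noteq> 0" and "x + a \<noteq> 0" and "x \<in> solutions (m - 1) a b"
  shows "x \<in> branch m a b (x ^ m) ((x + a) ^ m)"
proof -
  have "b * x * (x + a) = ((x + a) ^ (m - 1) + x ^ (m - 1)) * x * (x + a)"
    using assms(3) by (simp add: solutions_def)
  also have "\<dots> = ((x + a) ^ (m - 1) * (x + a)) * x + (x ^ (m - 1) * x) * (x + a)"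
    by (simp add: algebra_simps)
  also have "\<dots> = (x + a) ^ m * x + x ^ m * (x + a)"
    by (simp only: power_pred_mult)
  finally show ?thesis using assms(1,2) by (simp add: branch_def)
qed

lemma branch_signs:
  fixes a b u v x :: 'a
  assumes "x \<in> branch m a b u v"
  shows "u * u = 1" and "v * v = 1"
  using assms power_m_square by (auto simp: branch_def)

lemma power_m_branch_pair:
  fixes a b u v x y :: 'a
  assumes "b \<noteq> 0" and x: "x \<in> branch m a b u v" and y: "y \<in> branch m a b u v" and "x \<noteq> y"
  shows "(- (u * a * b)) ^ m = 1" and "(v * a * b) ^ m = 1"
proof -
  have "(b * - (u * a)) ^ m = x ^ m * y ^ m"
    using power_m_scaled_product[OF assms(1) branch_pair_vieta(1)[OF x y \<open>x \<noteq> y\<close>]] .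
  then show "(- (u * a * b)) ^ m = 1"
    using x y branch_signs(1)[OF x] by (simp add: branch_def ac_simps)
  have "(b * (v * a)) ^ m = (x + a) ^ m * (y + a) ^ m"
    using power_m_scaled_product[OF assms(1) branch_pair_vieta(2)[OF x y \<open>x \<noteq> y\<close>]] .
  then show "(v * a * b) ^ m = 1"
    using x y branch_signs(2)[OF x] by (simp add: branch_def ac_simps)
qed

lemma power_m_mixed_branch:
  fixes a b u x :: 'a
  assumes "b \<noteq> 0" and x: "x \<in> branch m a b u (- u)"
  shows "(u * a * b) ^ m = - 1"
proof -
  have "(b * (u * a)) ^ m = x ^ m * (x + a) ^ m"
    using power_m_scaled_product[OF assms(1) mixed_branch_eq[OF x]] .
  then show ?thesis using x branch_signs(1)[OF x] by (simp add: branch_def ac_simps)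
qed

text \<open>A branch with two points forces \<open>(-1)\<^sup>m = u v\<close>: compare the characters of the
  Vieta relations, and for \<open>v = -u\<close> also that of a single point.\<close>
lemma card_branch_le_1:
  fixes a b u v :: 'a
  assumes "b \<noteq> 0" and "(- 1) ^ m \<noteq> u * v"
  shows "card (branch m a b u v) \<le> 1"
proof -
  have "x = y" if x: "x \<in> branch m a b u v" and y: "y \<in> branch m a b u v" for x y
  proof (rule ccontr)
    assume "x \<noteq> y"
    note pair = power_m_branch_pair[OF assms(1) x y \<open>x \<noteq> y\<close>]
    have flip: "(- (u * a * b)) ^ m = (- 1) ^ m * (u * a * b) ^ m"
      by (rule power_minus)
    have "v = u \<or> v = - u"
      using branch_signs[OF x] by (auto simp: square_eq_1_iff)
    then have "(- 1) ^ m = u * v"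
    proof
      assume "v = u"
      then show ?thesis using pair flip branch_signs(1)[OF x] by simp
    next
      assume "v = - u"
      then have "(u * a * b) ^ m = - 1" using power_m_mixed_branch[OF assms(1)] x by blast
      then show ?thesis using pair(1) flip branch_signs(1)[OF x] \<open>v = - u\<close>
        by (simp add: minus_equation_iff)
    qed
    then show False using assms(2) by contradiction
  qed
  then show ?thesis by (simp add: card_le_Suc0_iff_eq)
qed

text \<open>The reflection \<open>x \<mapsto> -a - x\<close> maps the \<open>(-1, -1)\<close>-branch onto solutions of the
  quadratic equation of the \<open>(1, 1)\<close>-branch, and off the branch itself when \<open>(-1)\<^sup>m = 1\<close>.\<close>
lemma card_concordant_branches_le_2:
  fixes a b :: 'a
  assumes "b \<noteq> 0" and "(- 1) ^ m = (1::'a)"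
  shows "card (branch m a b 1 1) + card (branch m a b (- 1) (- 1)) \<le> 2"
proof -
  let ?A = "branch m a b 1 1" and ?B = "branch m a b (- 1) (- 1)"
  define \<sigma> where "\<sigma> x = - a - x" for x :: 'a
  have "inj \<sigma>" by (simp add: \<sigma>_def inj_def)
  have power_\<sigma>: "\<sigma> x ^ m = (x + a) ^ m" for x
  proof -
    have "\<sigma> x = - (x + a)" by (simp add: \<sigma>_def)
    then show ?thesis using assms(2) power_minus[of "x + a" m] by simp
  qed
  have "\<sigma> y \<notin> ?A" if "y \<in> ?B" for y
    using that power_\<sigma>[of y] one_neq_minus_one by (simp add: branch_def)
  then have "?A \<inter> \<sigma> ` ?B = {}" by blast
  then have "card ?A + card ?B = card (?A \<union> \<sigma> ` ?B)"
    by (simp add: card_Un_disjoint card_image[OF inj_on_subset[OF \<open>inj \<sigma>\<close>]])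
  also have "\<dots> \<le> 2"
  proof (rule card_le_2_if_quadratic[OF assms(1), where \<beta> = "a * b - 2" and \<gamma> = "- a"])
    fix x assume "x \<in> ?A \<union> \<sigma> ` ?B"
    then show "b * x\<^sup>2 + (a * b - 2) * x + - a = 0"
    proof
      assume "x \<in> ?A"
      then show ?thesis by (auto simp: branch_def power2_eq_square algebra_simps)
    next
      assume "x \<in> \<sigma> ` ?B"
      then obtain y where y: "y \<in> ?B" and x: "x = \<sigma> y" by blast
      have "b * x\<^sup>2 + (a * b - 2) * x + - a = b * y * (y + a) + y + (y + a)"
        unfolding x \<sigma>_def by (simp add: power2_eq_square algebra_simps)
      also have "\<dots> = 0" using y by (simp add: branch_def)
      finally show ?thesis .
    qed
  qed
  finally show ?thesis .
qed

lemma endpoint_solutions: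
  fixes a b :: 'a
  shows "0 \<in> solutions (m - 1) a b \<Longrightarrow> a * b = a ^ m"
    and "- a \<in> solutions (m - 1) a b \<Longrightarrow> a * b = - ((- a) ^ m)"
proof -
  show "a * b = a ^ m" if "0 \<in> solutions (m - 1) a b"
  proof -
    have "a ^ (m - 1) = b" using that m_ge_2 by (simp add: solutions_def power_0_left)
    then show ?thesis using power_pred_mult[of a] by (simp add: mult.commute)
  qed
  show "a * b = - ((- a) ^ m)" if "- a \<in> solutions (m - 1) a b"
  proof -
    have "(- a) ^ (m - 1) = b" using that m_ge_2 by (simp add: solutions_def power_0_left)
    then have "- (a * b) = (- a) ^ m" using power_pred_mult[of "- a"] by (simp add: mult.commute)
    then show ?thesis by (metis minus_minus)
  qed
qed

text \<open>A solution at \<open>0\<close> or \<open>-a\<close> gives \<open>a b = \<plusminus>a ^ m\<close>.  For \<open>u = a ^ m\<close> this contradicts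
  \<open>(u a b) ^ m = -1\<close>; for \<open>u = -a ^ m\<close> it makes \<open>x / a\<close> a primitive cube root of unity.\<close>
lemma mixed_branch_empty_if_endpoint_solution:
  fixes a b u :: 'a
  assumes "a \<noteq> 0" and "b \<noteq> 0" and "solutions (m - 1) a b \<inter> {0, - a} \<noteq> {}"
  shows "branch m a b u (- u) = {}"
proof (rule ccontr)
  assume "branch m a b u (- u) \<noteq> {}"
  then obtain x where x: "x \<in> branch m a b u (- u)" by blast
  have u: "u = 1 \<or> u = - 1" using branch_signs(1)[OF x] square_eq_1_iff by blast
  have mixed: "(u * a * b) ^ m = - 1" using power_m_mixed_branch[OF assms(2) x] .
  have sign_a: "a ^ m = 1 \<or> a ^ m = - 1" using power_m_cases[OF assms(1)] .
  have "a * b = a ^ m \<or> ((- 1 :: 'a) ^ m = 1 \<and> a * b = - (a ^ m))"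
    using assms(3) endpoint_solutions power_minus[of a m] power_m_cases[of "- 1"] by auto
  then show False
  proof
    assume ab: "a * b = a ^ m"
    show False
    proof (cases "u = a ^ m")
      case True
      then show False using mixed ab power_m_square[OF assms(1)] one_neq_minus_one
        by (simp add: mult.assoc)
    next
      case False
      then have u_eq: "u = - (a ^ m)" using u sign_a by auto
      have "a ^ m * (x * (x + a)) = a * (b * x * (x + a))" by (simp add: ab[symmetric] ac_simps)
      also have "\<dots> = a ^ m * - (a * a)" using mixed_branch_eq[OF x] u_eq by (simp add: ac_simps)
      finally have "x * (x + a) = - (a * a)"
        by (simp only: mult_left_cancel[OF power_not_zero[OF assms(1)]])
      then have "x ^ m = a ^ m" by (rule power_m_eq_if_primitive_cube_root[OF assms(1)])
      moreover have "x ^ m = u" using x by (simp add: branch_def)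
      ultimately have "a ^ m = - (a ^ m)" using u_eq by simp
      then show False using sign_a one_neq_minus_one by (metis minus_minus)
    qed
  next
    assume "(- 1 :: 'a) ^ m = 1 \<and> a * b = - (a ^ m)"
    then have "(u * a * b) ^ m = 1" using u sign_a by (auto simp: mult.assoc)
    then show False using mixed one_neq_minus_one by simp
  qed
qed

lemma card_solutions_le_branch_sum:
  fixes a b :: 'a
  shows "card (solutions (m - 1) a b) \<le> card (solutions (m - 1) a b \<inter> {0, - a})
           + card (branch m a b 1 1) + card (branch m a b (- 1) (- 1))
           + card (branch m a b 1 (- 1)) + card (branch m a b (- 1) 1)"
proof -
  let ?S = "solutions (m - 1) a b"
  have "?S \<subseteq> (?S \<inter> {0, - a}) \<union> branch m a b 1 1 \<union> branch m a b (- 1) (- 1)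
              \<union> branch m a b 1 (- 1) \<union> branch m a b (- 1) 1" (is "_ \<subseteq> ?U")
  proof
    fix x assume x: "x \<in> ?S"
    show "x \<in> ?U"
    proof (cases "x = 0 \<or> x + a = 0")
      case True
      then show ?thesis using x by (auto simp: eq_neg_iff_add_eq_0)
    next
      case False
      then have "x \<in> branch m a b (x ^ m) ((x + a) ^ m)"
        using solution_in_branch x by blast
      then show ?thesis using power_m_cases[of x] power_m_cases[of "x + a"] False by auto
    qed
  qed
  then have "card ?S \<le> card ?U" by (rule card_mono[rotated]) simp
  also have "\<dots> \<le> card (?S \<inter> {0, - a})
           + card (branch m a b 1 1) + card (branch m a b (- 1) (- 1))
           + card (branch m a b 1 (- 1)) + card (branch m a b (- 1) 1)"
    by (intro order_trans[OF card_Un_le] add_right_mono) simp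
  finally show ?thesis .
qed

lemma card_solutions_le_4_if_minus_one_square:
  fixes a b :: 'a
  assumes "a \<noteq> 0" and "b \<noteq> 0" and "(- 1) ^ m = (1::'a)"
  shows "card (solutions (m - 1) a b) \<le> 4"
proof -
  let ?E = "solutions (m - 1) a b \<inter> {0, - a}"
  have concordant: "card (branch m a b 1 1) + card (branch m a b (- 1) (- 1)) \<le> 2"
    using card_concordant_branches_le_2[OF assms(2,3)] .
  have mixed: "card (branch m a b 1 (- 1)) \<le> 1" "card (branch m a b (- 1) 1) \<le> 1"
    using card_branch_le_1[OF assms(2)] assms(3) one_neq_minus_one by auto
  have "\<not> {0, - a} \<subseteq> solutions (m - 1) a b"
  proof
    assume "{0, - a} \<subseteq> solutions (m - 1) a b"
    then have zero: "0 \<in> solutions (m - 1) a b" and minus: "- a \<in> solutions (m - 1) a b"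
      by auto
    have "a ^ m = a * b" using endpoint_solutions(1)[OF zero] by simp
    also have "\<dots> = - ((- a) ^ m)" using endpoint_solutions(2)[OF minus] .
    also have "- ((- a) ^ m) = - (a ^ m)" using assms(3) power_minus[of a m] by simp
    finally have "a ^ m = - (a ^ m)" .
    then show False using power_m_cases[OF assms(1)] one_neq_minus_one by (metis minus_minus)
  qed
  then have "?E \<subset> {0, - a}" by blast
  then have "card ?E < card {0, - a}" by (rule psubset_card_mono[rotated]) simp
  then have endpoints: "card ?E \<le> 1" using assms(1) by simp
  have "card ?E + card (branch m a b 1 (- 1)) + card (branch m a b (- 1) 1) \<le> 2"
  proof (cases "?E = {}")
    case True
    then show ?thesis using mixed by simp
  next
    case False
    then have "branch m a b 1 (- 1) = {}" and "branch m a b (- 1) 1 = {}"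
      using mixed_branch_empty_if_endpoint_solution[OF assms(1,2) False, of 1]
        mixed_branch_empty_if_endpoint_solution[OF assms(1,2) False, of "- 1"] by simp_all
    then show ?thesis using endpoints by simp
  qed
  then show ?thesis using card_solutions_le_branch_sum[of a b] concordant by linarith
qed

lemma card_solutions_le_4_if_minus_one_nonsquare:
  fixes a b :: 'a
  assumes "a \<noteq> 0" and "b \<noteq> 0" and "(- 1) ^ m = (- 1::'a)"
  shows "card (solutions (m - 1) a b) \<le> 4"
proof -
  let ?E = "solutions (m - 1) a b \<inter> {0, - a}"
  have concordant: "card (branch m a b 1 1) \<le> 1" "card (branch m a b (- 1) (- 1)) \<le> 1"
    using card_branch_le_1[OF assms(2)] assms(3) one_neq_minus_one by auto
  have mixed: "card (branch m a b 1 (- 1)) \<le> 2" "card (branch m a b (- 1) 1) \<le> 2"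
    using card_branch_le_2[OF assms(2)] by auto
  have "card ?E \<le> card {0, - a}" by (rule card_mono) auto
  then have endpoints: "card ?E \<le> 2" using card_insert_le_m1[of 2 "{- a}" 0] by simp
  have one_mixed_empty: "branch m a b 1 (- 1) = {} \<or> branch m a b (- 1) 1 = {}"
  proof (rule ccontr)
    assume "\<not> ?thesis"
    then obtain x y where "x \<in> branch m a b 1 (- 1)" and "y \<in> branch m a b (- 1) (- (- 1))"
      by auto
    then have "(a * b) ^ m = - 1" and "(- (a * b)) ^ m = - 1"
      using power_m_mixed_branch[OF assms(2)] by fastforce+
    then show False using assms(3) power_minus[of "a * b" m] one_neq_minus_one by simp
  qed
  have "card ?E + card (branch m a b 1 (- 1)) + card (branch m a b (- 1) 1) \<le> 2"
  proof (cases "?E = {}")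
    case True
    then show ?thesis using one_mixed_empty mixed by auto
  next
    case False
    then have "branch m a b 1 (- 1) = {}" and "branch m a b (- 1) 1 = {}"
      using mixed_branch_empty_if_endpoint_solution[OF assms(1,2) False, of 1]
        mixed_branch_empty_if_endpoint_solution[OF assms(1,2) False, of "- 1"] by simp_all
    then show ?thesis using endpoints by simp
  qed
  then show ?thesis using card_solutions_le_branch_sum[of a b] concordant by linarith
qed

lemma eq_or_eq_minus_if_power_pred_eq:
  fixes x y :: 'a
  assumes "x ^ (m - 1) = y ^ (m - 1)"
  shows "y = x \<or> y = - x"
proof (cases "x = 0 \<or> y = 0")
  case True
  then show ?thesis using assms m_ge_2 by (auto simp: power_0_left)
next
  case False
  have "x ^ m * y = x ^ (m - 1) * x * y" by (simp only: power_pred_mult)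
  also have "\<dots> = y ^ (m - 1) * y * x" by (simp only: assms ac_simps)
  also have "\<dots> = y ^ m * x" by (simp only: power_pred_mult)
  finally have "x ^ m * y = y ^ m * x" .
  have "y = (x ^ m * x ^ m) * y" using power_m_square[of x] False by simp
  also have "\<dots> = x ^ m * (y ^ m * x)" by (simp only: mult.assoc \<open>x ^ m * y = y ^ m * x\<close>)
  also have "\<dots> = (x * y) ^ m * x" by (simp only: power_mult_distrib mult.assoc)
  finally have "y = (x * y) ^ m * x" .
  then show ?thesis using power_m_cases[of "x * y"] False by auto
qed

lemma card_solutions_zero_shift_le_2: "card (solutions (m - 1) (0::'a) b) \<le> 2"
proof (rule card_le_2_if_plus_minus)
  fix x y assume "x \<in> solutions (m - 1) 0 b" and "y \<in> solutions (m - 1) 0 b"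
  then have "x ^ (m - 1) + x ^ (m - 1) = y ^ (m - 1) + y ^ (m - 1)" by (simp add: solutions_def)
  then have "2 * x ^ (m - 1) = 2 * y ^ (m - 1)" by (simp only: mult_2)
  then have "x ^ (m - 1) = y ^ (m - 1)" using two_neq_zero by simp
  then show "y = x \<or> y = - x" by (rule eq_or_eq_minus_if_power_pred_eq)
qed

lemma card_solutions_zero_le_1:
  fixes a :: 'a
  assumes "a \<noteq> 0"
  shows "card (solutions (m - 1) a 0) \<le> 1"
proof -
  have "2 * x + a = 0" if x: "x \<in> solutions (m - 1) a 0" for x
  proof -
    have "x \<noteq> 0"
    proof
      assume "x = 0"
      then have "a ^ m = 0" using endpoint_solutions(1)[of a 0] x by simp
      then show False using assms by simp
    qed
    moreover have "x + a \<noteq> 0"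
    proof
      assume "x + a = 0"
      then have "x = - a" by (simp add: eq_neg_iff_add_eq_0)
      then have "(- a) ^ m = 0" using endpoint_solutions(2)[of a 0] x by simp
      then show False using assms by simp
    qed
    ultimately have "x \<in> branch m a 0 (x ^ m) ((x + a) ^ m)" using solution_in_branch x by blast
    then have eq: "(x + a) ^ m * x + x ^ m * (x + a) = 0" by (simp add: branch_def)
    have "(x + a) ^ m = x ^ m \<or> (x + a) ^ m = - (x ^ m)"
      using power_m_cases[OF \<open>x \<noteq> 0\<close>] power_m_cases[OF \<open>x + a \<noteq> 0\<close>] by (elim disjE) simp_all
    then show ?thesis
    proof
      assume "(x + a) ^ m = x ^ m"
      then have "x ^ m * (2 * x + a) = (x + a) ^ m * x + x ^ m * (x + a)" by (simp add: algebra_simps)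
      then have "x ^ m * (2 * x + a) = 0" using eq by simp
      then show ?thesis using \<open>x \<noteq> 0\<close> by simp
    next
      assume "(x + a) ^ m = - (x ^ m)"
      then have "x ^ m * a = (x + a) ^ m * x + x ^ m * (x + a)" by (simp add: algebra_simps)
      then have "x ^ m * a = 0" using eq by simp
      then show ?thesis using \<open>x \<noteq> 0\<close> assms by simp
    qed
  qed
  then have "x = y" if "x \<in> solutions (m - 1) a 0" "y \<in> solutions (m - 1) a 0" for x y
    using that two_neq_zero by (metis add_right_cancel mult_left_cancel)
  then show ?thesis by (simp add: card_le_Suc0_iff_eq)
qed

lemma card_solutions_le_4: "card (solutions (m - 1) a b) \<le> 4" for a b :: 'a
proof -
  consider "a = 0" | "a \<noteq> 0" "b = 0" | "a \<noteq> 0" "b \<noteq> 0" by blast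
  then show ?thesis
  proof cases
    case 1
    then show ?thesis using card_solutions_zero_shift_le_2[of b] by simp
  next
    case 2
    then show ?thesis using card_solutions_zero_le_1[of a] by simp
  next
    case 3
    then show ?thesis
      using power_m_cases[of "- 1"] card_solutions_le_4_if_minus_one_square
        card_solutions_le_4_if_minus_one_nonsquare by auto
  qed
qed

end

theorem theorem8:
  fixes p n :: nat and F :: "'a::{field,finite} \<Rightarrow> 'a"
  assumes "prime p" and "odd p" and "n > 0"
    and "card (UNIV :: 'a set) = p ^ n"
    and "p ^ n > 3"
    and "F = (\<lambda>x. x ^ ((p ^ n - 3) div 2))"
  shows "c_diff_uniformity F (-1) \<le> 4"
proof -
  have "odd (p ^ n)" using assms(2) by simp
  then obtain m where q: "p ^ n = 2 * m + 1" by (rule oddE)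
  then have card: "card (UNIV :: 'a set) = 2 * m + 1" using assms(4) by simp
  have m: "m \<ge> 2" and d: "(p ^ n - 3) div 2 = m - 1" using assms(5) q by auto
  have two: "(2::'a) \<noteq> 0" by (rule two_neq_zero_if_odd_card) (simp add: card)
  have fermat: "x ^ (2 * m) = 1" if "x \<noteq> 0" for x :: 'a
    using power_card_minus_one_eq_one[OF that] card by simp
  show ?thesis unfolding assms(6) d
  proof (rule c_diff_uniformity_le)
    fix a b :: 'a
    show "c_delta (\<lambda>x. x ^ (m - 1)) (- 1) a b \<le> 4"
      unfolding c_delta_power_minus_one by (rule card_solutions_le_4) (use two fermat m in auto)
  qed
qed

end
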